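(* Let $\mathfrak h\in\mathrm{Mult}_\rho$, let $\Delta$ be a segment admissible to $\mathfrak h$, and let $\Delta'=[a',b']_\rho$ be linked to $\Delta$ with $\Delta'>\Delta$, such that $(\Delta,\Delta',\mathfrak h)$ satisfies the non-overlapping property. Then for every segment $\widetilde\Delta=[\widetilde a,b']_\rho$ with $\widetilde a\ge a'$ that is linked to $\Delta$, the triple $(\Delta,\widetilde\Delta,\mathfrak h)$ also satisfies the non-overlapping property.
   Context: Segments: for integers $a\le b$, $[a,b]_\rho$ (think of the integer interval $\{a,\dots,b\}$), with $a(\Delta)=a$, $b(\Delta)=b$, and inclusion of segments as intervals. Two segments are linked if their union is a segment (an interval) and neither contains the other; for linked $\Delta,\Delta'$ write $\Delta<\Delta'$ (or $\Delta'>\Delta$) if $b(\Delta)<b(\Delta')$. A multisegment is a finite multiset of nonempty segments; $\mathrm{Mult}_\rho$ is the set of multisegments. Write $[x,y]_\rho\prec^L[x',y']_\rho$ if $x<x'$, or $x=x'$ and $y<y'$. A segment $\Delta=[a,b]_\rho$ is admissible to $\mathfrak h$ if $\mathfrak h$ contains a segment $[a,c]_\rho$ with $c\ge b$. Removal sequence: for $\Delta=[a,b]_\rho$ admissible to $\mathfrak h$, let $\Delta_1=[a_1,b_1]_\rho$ be a shortest segment of $\mathfrak h$ with $a_1=a$ and $b_1\ge b$; recursively, let $\Delta_i=[a_i,b_i]_\rho$ be the $\prec^L$-minimal segment of $\mathfrak h$ with $a_{i-1}<a_i$ and $b\le b_i<b_{i-1}$, stopping when none exists; $\Delta_1,\dots,\Delta_r$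 is the removal sequence for $(\Delta,\mathfrak h)$. Non-overlapping property: for $\Delta$ admissible to $\mathfrak h$ and $\Delta'$ linked to $\Delta$ with $\Delta'>\Delta$, the triple $(\Delta,\Delta',\mathfrak h)$ satisfies it if, for the shortest segment $\overline\Delta$ in the removal sequence for $(\Delta,\mathfrak h)$ that contains the point $a(\Delta')-1$, one has $\Delta'\not\subset\overline\Delta$. *)

theory Defs
  imports Main "HOL-Library.Multiset"
begin

text \<open>A segment [a,b]_rho (rho fixed) is represented by the pair (a,b) of integers,
  standing for the integer interval {a..b}; it is a (nonempty) segment iff a \<le> b.\<close>

type_synonym seg = "int \<times> int"

definition is_seg :: "seg \<Rightarrow> bool" where
  "is_seg D \<longleftrightarrow> fst D \<le> snd D"

definition seg_set :: "seg \<Rightarrow> int set" where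
  "seg_set D = {fst D .. snd D}"

definition is_mult :: "seg multiset \<Rightarrow> bool" where
  "is_mult h \<longleftrightarrow> (\<forall>D\<in>#h. is_seg D)"

definition linked :: "seg \<Rightarrow> seg \<Rightarrow> bool" where
  "linked D D' \<longleftrightarrow>
     (\<exists>c d. seg_set D \<union> seg_set D' = {c..d}) \<and>
     \<not> seg_set D \<subseteq> seg_set D' \<and> \<not> seg_set D' \<subseteq> seg_set D"

definition seg_less :: "seg \<Rightarrow> seg \<Rightarrow> bool" where
  "seg_less D D' \<longleftrightarrow> linked D D' \<and> snd D < snd D'"

definition precL :: "seg \<Rightarrow> seg \<Rightarrow> bool" where
  "precL D D' \<longleftrightarrow> fst D < fst D' \<or> (fst D = fst D' \<and> snd D < snd D')"

definition admissible :: "seg \<Rightarrow> seg multiset \<Rightarrow> bool" where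
  "admissible D h \<longleftrightarrow> (\<exists>c. c \<ge> snd D \<and> (fst D, c) \<in># h)"

definition precL_min :: "seg set \<Rightarrow> seg" where
  "precL_min S = (THE D. D \<in> S \<and> (\<forall>E\<in>S. E \<noteq> D \<longrightarrow> precL D E))"

definition first_cands :: "seg \<Rightarrow> seg multiset \<Rightarrow> seg set" where
  "first_cands D h = {E \<in> set_mset h. fst E = fst D \<and> snd E \<ge> snd D}"

definition rem_first :: "seg \<Rightarrow> seg multiset \<Rightarrow> seg" where
  "rem_first D h = (THE E. E \<in> first_cands D h \<and>
      (\<forall>F\<in>first_cands D h. snd E - fst E \<le> snd F - fst F))"

definition next_cands :: "seg \<Rightarrow> seg multiset \<Rightarrow> seg \<Rightarrow> seg set" where
  "next_cands D h P = {E \<in> set_mset h. fst P < fst E \<and> snd D \<le> snd E \<and> snd E < snd P}"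

text \<open>rem_seq D h i = Some Delta_{i+1}, or None once the sequence has stopped.\<close>
primrec rem_seq :: "seg \<Rightarrow> seg multiset \<Rightarrow> nat \<Rightarrow> seg option" where
  "rem_seq D h 0 = Some (rem_first D h)"
| "rem_seq D h (Suc i) =
     (case rem_seq D h i of
        None \<Rightarrow> None
      | Some P \<Rightarrow> (if next_cands D h P = {} then None
                   else Some (precL_min (next_cands D h P))))"

definition rem_set :: "seg \<Rightarrow> seg multiset \<Rightarrow> seg set" where
  "rem_set D h = {E. \<exists>i. rem_seq D h i = Some E}"

text \<open>Non-overlapping property of the triple (D, D', h) (including its standing
  preconditions: D admissible to h, D' linked to D with D' > D).\<close>
definition non_overlapping :: "seg \<Rightarrow> seg \<Rightarrow> seg multiset \<Rightarrow> bool" where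
  "non_overlapping D D' h \<longleftrightarrow>
     admissible D h \<and> seg_less D D' \<and>
     (\<forall>Dbar. Dbar \<in> rem_set D h \<and> fst D' - 1 \<in> seg_set Dbar \<and>
        (\<forall>E\<in>rem_set D h. fst D' - 1 \<in> seg_set E \<longrightarrow> snd Dbar - fst Dbar \<le> snd E - fst E)
        \<longrightarrow> \<not> seg_set D' \<subseteq> seg_set Dbar)"

end

theory Submission
  imports Defs "HOL-Library.Product_Lexorder"
begin

(* For a point x, let D_x be the shortest term of the removal sequence for (D, h) containing x.
   The terms of the removal sequence are strictly nested and the first one contains D, so for
   a(D) <= x <= y <= b(D) the term D_x also contains y, whence b(D_y) <= b(D_x). As D_x starts
   at or before x, the non-overlapping property of (D, D', h) says exactly b(D_(a'-1)) < b(D').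
   Linkedness places a' - 1 <= at - 1 inside D, so b(D_(at-1)) <= b(D_(a'-1)) < b(D') too. *)

lemma precL_iff_less: "precL D E \<longleftrightarrow> D < E"
  by (cases D; cases E) (auto simp: precL_def)

lemma precL_min_mem:
  assumes "finite S" "S \<noteq> {}"
  shows "precL_min S \<in> S"
proof -
  have "\<exists>!D. D \<in> S \<and> (\<forall>E\<in>S. E \<noteq> D \<longrightarrow> precL D E)"
  proof (rule ex1I[of _ "Min S"])
    show "Min S \<in> S \<and> (\<forall>E\<in>S. E \<noteq> Min S \<longrightarrow> precL (Min S) E)"
      using assms by (auto simp: precL_iff_less order.not_eq_order_implies_strict)
  next
    fix D assume "D \<in> S \<and> (\<forall>E\<in>S. E \<noteq> D \<longrightarrow> precL D E)"
    then show "D = Min S"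
      using assms by (metis Min_in Min_le precL_iff_less leD)
  qed
  then show ?thesis
    unfolding precL_min_def by (rule theI'[THEN conjunct1])
qed

lemma rem_first_mem:
  assumes "admissible D h"
  shows "rem_first D h \<in> first_cands D h"
proof -
  let ?S = "first_cands D h"
  have "finite ?S" by (simp add: first_cands_def)
  moreover have "?S \<noteq> {}"
    using assms unfolding admissible_def first_cands_def by force
  ultimately obtain E where E: "E \<in> ?S" "\<forall>F\<in>?S. snd E - fst E \<le> snd F - fst F"
    using arg_min_if_finite[of ?S "\<lambda>E. snd E - fst E"] by (metis not_le)
  have "\<exists>!E. E \<in> ?S \<and> (\<forall>F\<in>?S. snd E - fst E \<le> snd F - fst F)"
  proof (rule ex1I[of _ E])
    fix G assume "G \<in> ?S \<and> (\<forall>F\<in>?S. snd G - fst G \<le> snd F - fst F)"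
    with E show "G = E"
      by (fastforce simp: first_cands_def prod_eq_iff)
  qed (use E in blast)
  then show ?thesis
    unfolding rem_first_def by (rule theI'[THEN conjunct1])
qed

lemma rem_seq_SucD:
  assumes "rem_seq D h (Suc i) = Some F"
  obtains E where "rem_seq D h i = Some E" "F \<in> next_cands D h E"
proof -
  obtain E where E: "rem_seq D h i = Some E"
    using assms by (cases "rem_seq D h i") auto
  with assms have "next_cands D h E \<noteq> {}" "F = precL_min (next_cands D h E)"
    by (auto split: if_splits)
  moreover have "finite (next_cands D h E)" by (simp add: next_cands_def)
  ultimately show ?thesis using E precL_min_mem that by blast
qed

lemma rem_seq_strictly_nested:
  assumes "rem_seq D h i = Some E" "rem_seq D h j = Some F" "i < j"
  shows "fst E < fst F \<and> snd F < snd E"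
  using assms(2,3)
proof (induction j arbitrary: F)
  case 0
  then show ?case by simp
next
  case (Suc j)
  obtain E' where E': "rem_seq D h j = Some E'" "F \<in> next_cands D h E'"
    using rem_seq_SucD[OF Suc.prems(1)] .
  show ?case
  proof (cases "i = j")
    case True
    then show ?thesis using assms(1) E' by (auto simp: next_cands_def)
  next
    case False
    then show ?thesis using Suc.IH[OF E'(1)] Suc.prems(2) E'(2) by (fastforce simp: next_cands_def)
  qed
qed

lemma rem_set_strictly_nested:
  assumes "E \<in> rem_set D h" "F \<in> rem_set D h"
  shows "E = F \<or> (fst E < fst F \<and> snd F < snd E) \<or> (fst F < fst E \<and> snd E < snd F)"
proof -
  obtain i j where i: "rem_seq D h i = Some E" and j: "rem_seq D h j = Some F"
    using assms by (auto simp: rem_set_def)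
  show ?thesis
    using rem_seq_strictly_nested[OF i j] rem_seq_strictly_nested[OF j i] i j
    by (cases i j rule: linorder_cases) auto
qed

lemma rem_set_mem:
  assumes "admissible D h" "E \<in> rem_set D h"
  shows "E \<in># h" "snd D \<le> snd E"
proof -
  have "F \<in># h \<and> snd D \<le> snd F" if "rem_seq D h i = Some F" for i F
    using that
  proof (induction i arbitrary: F)
    case 0
    then show ?case using rem_first_mem[OF assms(1)] by (auto simp: first_cands_def)
  next
    case (Suc i)
    obtain P where "rem_seq D h i = Some P" "F \<in> next_cands D h P"
      using rem_seq_SucD[OF Suc.prems] .
    then show ?case using Suc.IH by (auto simp: next_cands_def)
  qed
  then show "E \<in># h" "snd D \<le> snd E"
    using assms(2) unfolding rem_set_def by blast+
qed

lemma rem_first_in_rem_set: "rem_first D h \<in> rem_set D h"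
proof -
  have "rem_seq D h 0 = Some (rem_first D h)" by simp
  then show ?thesis unfolding rem_set_def by blast
qed

definition shortest_containing :: "seg \<Rightarrow> seg multiset \<Rightarrow> int \<Rightarrow> seg \<Rightarrow> bool" where
  "shortest_containing D h x Dbar \<longleftrightarrow>
     Dbar \<in> rem_set D h \<and> x \<in> seg_set Dbar \<and>
     (\<forall>E\<in>rem_set D h. x \<in> seg_set E \<longrightarrow> snd Dbar - fst Dbar \<le> snd E - fst E)"

lemma non_overlapping_iff:
  "non_overlapping D D' h \<longleftrightarrow>
     admissible D h \<and> seg_less D D' \<and>
     (\<forall>Dbar. shortest_containing D h (fst D' - 1) Dbar \<longrightarrow> \<not> seg_set D' \<subseteq> seg_set Dbar)"
  unfolding non_overlapping_def shortest_containing_def by blast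

lemma shortest_containing_exists:
  assumes "admissible D h" "fst D \<le> x" "x \<le> snd D"
  obtains Dbar where "shortest_containing D h x Dbar"
proof -
  let ?S = "{E \<in> rem_set D h. x \<in> seg_set E}"
  have "finite ?S"
    by (rule finite_subset[of _ "set_mset h"]) (use rem_set_mem(1)[OF assms(1)] in auto)
  moreover have "rem_first D h \<in> ?S"
    using rem_first_mem[OF assms(1)] rem_first_in_rem_set assms(2,3)
    by (auto simp: first_cands_def seg_set_def)
  ultimately obtain Dbar where "Dbar \<in> ?S" "\<forall>E\<in>?S. \<not> snd E - fst E < snd Dbar - fst Dbar"
    using arg_min_if_finite[of ?S "\<lambda>E. snd E - fst E"] by blast
  then have "shortest_containing D h x Dbar"
    unfolding shortest_containing_def by force
  then show ?thesis by (rule that)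
qed

lemma shortest_containing_snd_le:
  assumes "shortest_containing D h x Dbar" "E \<in> rem_set D h" "x \<in> seg_set E"
  shows "snd Dbar \<le> snd E"
  using assms rem_set_strictly_nested[of Dbar D h E]
  unfolding shortest_containing_def by fastforce

lemma shortest_containing_snd_antimono:
  assumes "admissible D h" "x \<le> y" "y \<le> snd D"
    and "shortest_containing D h x Dx" "shortest_containing D h y Dy"
  shows "snd Dy \<le> snd Dx"
proof (rule shortest_containing_snd_le[OF assms(5)])
  show "Dx \<in> rem_set D h" using assms(4) by (simp add: shortest_containing_def)
  then have "snd D \<le> snd Dx" by (rule rem_set_mem(2)[OF assms(1)])
  then show "y \<in> seg_set Dx"
    using assms(2,3,4) by (auto simp: shortest_containing_def seg_set_def)
qed

lemma linked_less_fst_bounds: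
  assumes "linked X Y" "snd X < snd Y" "is_seg X" "is_seg Y"
  shows "fst X < fst Y" "fst Y \<le> snd X + 1"
proof -
  obtain c d where cd: "seg_set X \<union> seg_set Y = {c..d}"
    and not_sub: "\<not> seg_set X \<subseteq> seg_set Y"
    using assms(1) by (auto simp: linked_def)
  show "fst X < fst Y"
    using not_sub assms(2) by (auto simp: seg_set_def)
  have "snd X \<in> {c..d}" "snd Y \<in> {c..d}"
    using cd assms(3,4) by (auto simp: seg_set_def is_seg_def)
  then have "snd X + 1 \<in> seg_set X \<union> seg_set Y"
    using cd assms(2) by auto
  then show "fst Y \<le> snd X + 1"
    by (auto simp: seg_set_def)
qed

theorem mainTheorem18:
  fixes h :: "seg multiset" and D D' :: seg and at :: int
  assumes "is_mult h"
    and "is_seg D" and "is_seg D'"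
    and "admissible D h"
    and "linked D D'" and "seg_less D D'"
    and "non_overlapping D D' h"
    and "fst D' \<le> at" and "at \<le> snd D'"
    and "linked D (at, snd D')"
  shows "non_overlapping D (at, snd D') h"
proof -
  have less: "snd D < snd D'" using assms(6) by (simp add: seg_less_def)
  have start': "fst D < fst D'" "fst D' \<le> snd D + 1"
    using linked_less_fst_bounds[OF assms(5) less assms(2,3)] by auto
  have "is_seg (at, snd D')" using assms(9) by (simp add: is_seg_def)
  then have start_at: "at \<le> snd D + 1"
    using linked_less_fst_bounds(2)[OF assms(10) _ assms(2)] less by simp
  have "fst D \<le> fst D' - 1" "fst D' - 1 \<le> snd D" using start' by linarith+
  then obtain Dx where Dx: "shortest_containing D h (fst D' - 1) Dx"
    by (rule shortest_containing_exists[OF assms(4)])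
  have "\<not> seg_set D' \<subseteq> seg_set Dx"
    using assms(7) Dx unfolding non_overlapping_iff by blast
  then have Dx_end: "snd Dx < snd D'"
    using Dx by (auto simp: shortest_containing_def seg_set_def)
  have "\<not> seg_set (at, snd D') \<subseteq> seg_set Dy"
    if Dy: "shortest_containing D h (at - 1) Dy" for Dy
  proof -
    have "snd Dy \<le> snd Dx"
      using shortest_containing_snd_antimono[OF assms(4) _ _ Dx Dy] assms(8) start_at by linarith
    then show ?thesis using Dx_end assms(9) by (simp add: seg_set_def)
  qed
  moreover have "seg_less D (at, snd D')"
    using assms(10) less by (simp add: seg_less_def)
  ultimately show ?thesis
    using assms(4) unfolding non_overlapping_iff by simp
qed

end
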